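(* Let $S$ be a set with at least two elements and let $T=(-\times S)^S$ be the global state monad, applied pointwise as an indexed monad on $\mathrm{Fam}(\mathbf{Set})$, with unit $\eta_A(a)=(s\mapsto(a,s))$. Take $\Gamma=1$, $A=1$, and the family $B$ over $\Gamma.TA\cong (1\times S)^S$ given by $B(g)=1$ if $g=(s\mapsto( *,s))$ and $B(g)=\emptyset$ otherwise. Then $\prod_{a\in A}(B(\eta_A(a))\times S)^S$ is nonempty while $\prod_{g\in(A\times S)^S}(B(g)\times S)^S$ is empty. Consequently there is no map $\mathrm{Fam}(\mathbf{Set})(\Gamma.A)(1,TB\{\mathbf{p}_\Gamma(\eta_A)\})\to\mathrm{Fam}(\mathbf{Set})(\Gamma.TA)(1,TB)$, so the Eilenberg–Moore dCBPV$^-$ model of $T$ on $\mathrm{Fam}(\mathbf{Set})$ admits no dependent Kleisli extensions.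
   Context: $\mathrm{Fam}(\mathbf{Set}):\mathbf{Set}^{op}\to\mathbf{Cat}$ sends a set $X$ to the category of $X$-indexed families of sets with families of functions as morphisms, reindexing by precomposition. Comprehension: $X.A=\{(x,a)\mid x\in X,a\in A(x)\}$; global elements $1\to A$ over $X$ are dependent functions $\prod_{x\in X}A(x)$. For $g:A\to A'$ over $\Gamma$, $\mathbf{p}_\Gamma(g)$ is $(c,a)\mapsto(c,g_c(a))$. A pointwise monad acts by $(TA)(x)=T(A(x))$. Dependent Kleisli extensions (for empty trailing context) are maps assigning to each global section of $TB\{\mathbf{p}_\Gamma(\eta_A)\}$ over $\Gamma.A$ a global section of $TB$ over $\Gamma.TA$, for $B$ over $\Gamma.TA$, subject to unitality and composition laws. *)

theory Defs
  imports "HOL-Library.FuncSet"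
begin

text \<open>Global state monad on a set X, with the state set S represented by the type 's:
  T X = (X \<times> S)^S.\<close>
definition stT :: "'x set \<Rightarrow> ('s \<Rightarrow> 'x \<times> 's) set" where
  "stT X = (UNIV :: 's set) \<rightarrow> X \<times> (UNIV :: 's set)"

definition eta :: "'x \<Rightarrow> ('s \<Rightarrow> 'x \<times> 's)" where
  "eta a = (\<lambda>s. (a, s))"

text \<open>The family B over Gamma.TA = (1 \<times> S)^S (Gamma = A = 1, 1 = unit).\<close>
definition Bfam :: "('s \<Rightarrow> unit \<times> 's) \<Rightarrow> unit set" where
  "Bfam g = (if g = eta () then UNIV else {})"

text \<open>Global sections of TB{p(eta_A)} over Gamma.A, and of TB over Gamma.TA.\<close>
definition secs_reindexed :: "(unit \<Rightarrow> ('s \<Rightarrow> unit \<times> 's)) set" where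
  "secs_reindexed = Pi (UNIV :: unit set) (\<lambda>a. stT (Bfam (eta a :: 's \<Rightarrow> unit \<times> 's)))"

definition secs_TA :: "(('s \<Rightarrow> unit \<times> 's) \<Rightarrow> ('s \<Rightarrow> unit \<times> 's)) set" where
  "secs_TA = Pi (UNIV :: ('s \<Rightarrow> unit \<times> 's) set) (\<lambda>g. stT (Bfam g))"

end

theory Submission
  imports Defs
begin

text \<open>The unit section \<open>a \<mapsto> \<eta>(a)\<close> lives over \<open>\<Gamma>.A\<close>, because \<open>B\<close> is inhabited exactly at
  \<open>\<eta>(*)\<close>. Over \<open>\<Gamma>.TA\<close> a section must also choose a point of \<open>T(B(g)) = (\<emptyset> \<times> S)\<^sup>S\<close> at
  a state transformer \<open>g \<noteq> \<eta>(*)\<close>, such as a constant one, and that set is empty since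
  \<open>S\<close> is nonempty.\<close>

lemma stT_empty [simp]: "stT {} = ({} :: ('s \<Rightarrow> 'x \<times> 's) set)"
  by (auto simp: stT_def)

lemma stT_UNIV_eta: "eta a \<in> stT UNIV"
  by (simp add: stT_def eta_def)

lemma const_state_neq_eta:
  fixes x y :: 's
  assumes "x \<noteq> y"
  shows "(\<lambda>_. (a, x)) \<noteq> eta a"
proof
  assume "(\<lambda>_. (a, x)) = eta a"
  then have "(a, x) = eta a y" by (rule fun_cong)
  with assms show False by (simp add: eta_def)
qed

lemma eta_in_secs_reindexed: "(\<lambda>_. eta ()) \<in> secs_reindexed"
  by (simp add: secs_reindexed_def Bfam_def stT_UNIV_eta)

lemma secs_TA_empty:
  assumes "\<exists>x y :: 's. x \<noteq> y"
  shows "(secs_TA :: (('s \<Rightarrow> unit \<times> 's) \<Rightarrow> ('s \<Rightarrow> unit \<times> 's)) set) = {}"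
proof -
  obtain x y :: 's where "x \<noteq> y" using assms by blast
  then have "Bfam (\<lambda>_. ((), x)) = {}"
    by (simp add: Bfam_def const_state_neq_eta)
  then have "stT (Bfam (\<lambda>_. ((), x))) = ({} :: ('s \<Rightarrow> unit \<times> 's) set)"
    by simp
  then show ?thesis
    unfolding secs_TA_def by blast
qed

theorem mainTheorem7:
  assumes "\<exists>x y :: 's. x \<noteq> y"
  shows "(secs_reindexed :: (unit \<Rightarrow> ('s \<Rightarrow> unit \<times> 's)) set) \<noteq> {}
    \<and> (secs_TA :: (('s \<Rightarrow> unit \<times> 's) \<Rightarrow> ('s \<Rightarrow> unit \<times> 's)) set) = {}
    \<and> \<not> (\<exists>F. F \<in> (secs_reindexed :: (unit \<Rightarrow> ('s \<Rightarrow> unit \<times> 's)) set)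
                    \<rightarrow> (secs_TA :: (('s \<Rightarrow> unit \<times> 's) \<Rightarrow> ('s \<Rightarrow> unit \<times> 's)) set))"
proof -
  have inhabited: "(secs_reindexed :: (unit \<Rightarrow> ('s \<Rightarrow> unit \<times> 's)) set) \<noteq> {}"
    using eta_in_secs_reindexed by blast
  have empty: "(secs_TA :: (('s \<Rightarrow> unit \<times> 's) \<Rightarrow> ('s \<Rightarrow> unit \<times> 's)) set) = {}"
    using secs_TA_empty assms .
  show ?thesis
    using inhabited empty by blast
qed

end
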